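(* For every $T_1,T_2\in\mathcal{T}_n$, if $M(T_1)=M(T_2)$, then $T_1=T_2$ (i.e., they are label-preservingly isomorphic).
   Context: A phylogenetic tree is a finite rooted tree (arcs directed away from the root) with no node of outdegree $1$, whose leaves are injectively labeled. $\mathcal{T}_n$ denotes the set of phylogenetic trees with $n$ leaves labeled $1,\dots,n$, up to label-preserving isomorphism. Internal nodes are the non-leaf nodes; $\mathcal{L}(T)$ is the set of leaves. The height of a node is the length of a longest directed path from it to a leaf. The bottom-up ordering of $T=(V,E)\in\mathcal{T}_n$ is the unique injective map $\ell:V\to\{1,\dots,|V|\}$ such that: (a) for a leaf $v$, $\ell(v)$ is its label; (b) if $\mathrm{height}(u)<\mathrm{height}(v)$ then $\ell(u)<\ell(v)$; (c) if $0<\mathrm{height}(u)=\mathrm{height}(v)$ and $\min\{\ell(x): x \text{ child of } u\}<\min\{\ell(x): x\text{ child of } v\}$ then $\ell(u)<\ell(v)$. The matching representation of $T$ is $M(T)=\{\ell(\mathrm{children}(u)) : u\in V\setminus\mathcal{L}(T)\}$, a partition of $\{1,\dots,|V|-1\}$. *)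

theory Defs
  imports Main
begin

text \<open>A phylogenetic tree is given concretely by a vertex set V, an arc set E
  (arcs directed away from the root) and a labelling lab of the vertices
  (only its values on the leaves matter).\<close>

definition children :: "('v \<times> 'v) set \<Rightarrow> 'v \<Rightarrow> 'v set" where
  "children E u = {w. (u, w) \<in> E}"

definition leaves :: "'v set \<Rightarrow> ('v \<times> 'v) set \<Rightarrow> 'v set" where
  "leaves V E = {v \<in> V. children E v = {}}"

definition rooted_tree :: "'v set \<Rightarrow> ('v \<times> 'v) set \<Rightarrow> bool" where
  "rooted_tree V E \<longleftrightarrow> finite V \<and> E \<subseteq> V \<times> V \<and>
     (\<exists>r\<in>V. (\<forall>u. (u, r) \<notin> E) \<and> (\<forall>v\<in>V - {r}. \<exists>!u. (u, v) \<in> E)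
             \<and> (\<forall>v\<in>V. (r, v) \<in> E\<^sup>*))"

definition phylo_tree :: "nat \<Rightarrow> 'v set \<Rightarrow> ('v \<times> 'v) set \<Rightarrow> ('v \<Rightarrow> nat) \<Rightarrow> bool" where
  "phylo_tree n V E lab \<longleftrightarrow> rooted_tree V E \<and>
     (\<forall>v\<in>V. card (children E v) \<noteq> 1) \<and>
     bij_betw lab (leaves V E) {1..n}"

definition phylo_iso :: "'a set \<Rightarrow> ('a \<times> 'a) set \<Rightarrow> ('a \<Rightarrow> nat) \<Rightarrow>
                         'b set \<Rightarrow> ('b \<times> 'b) set \<Rightarrow> ('b \<Rightarrow> nat) \<Rightarrow> bool" where
  "phylo_iso V1 E1 lab1 V2 E2 lab2 \<longleftrightarrow>
     (\<exists>f. bij_betw f V1 V2 \<and>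
          (\<forall>u\<in>V1. \<forall>v\<in>V1. (u, v) \<in> E1 \<longleftrightarrow> (f u, f v) \<in> E2) \<and>
          (\<forall>v\<in>leaves V1 E1. lab2 (f v) = lab1 v))"

definition height :: "'v set \<Rightarrow> ('v \<times> 'v) set \<Rightarrow> 'v \<Rightarrow> nat" where
  "height V E v = Max {k. \<exists>w\<in>leaves V E. (v, w) \<in> E ^^ k}"

text \<open>Bottom-up ordering conditions (a),(b),(c); we additionally normalise the
  map to be 0 outside V so that it is unique as a HOL function.\<close>
definition bottom_up :: "'v set \<Rightarrow> ('v \<times> 'v) set \<Rightarrow> ('v \<Rightarrow> nat) \<Rightarrow> ('v \<Rightarrow> nat) \<Rightarrow> bool" where
  "bottom_up V E lab lo \<longleftrightarrow>
     inj_on lo V \<and> lo ` V \<subseteq> {1..card V} \<and> (\<forall>v. v \<notin> V \<longrightarrow> lo v = 0) \<and>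
     (\<forall>v\<in>leaves V E. lo v = lab v) \<and>
     (\<forall>u\<in>V. \<forall>v\<in>V. height V E u < height V E v \<longrightarrow> lo u < lo v) \<and>
     (\<forall>u\<in>V. \<forall>v\<in>V. 0 < height V E u \<and> height V E u = height V E v \<and>
         Min (lo ` children E u) < Min (lo ` children E v) \<longrightarrow> lo u < lo v)"

definition bottom_up_ordering :: "'v set \<Rightarrow> ('v \<times> 'v) set \<Rightarrow> ('v \<Rightarrow> nat) \<Rightarrow> 'v \<Rightarrow> nat" where
  "bottom_up_ordering V E lab = (THE lo. bottom_up V E lab lo)"

definition matching_rep :: "'v set \<Rightarrow> ('v \<times> 'v) set \<Rightarrow> ('v \<Rightarrow> nat) \<Rightarrow> nat set set" where
  "matching_rep V E lab =
     (let lo = bottom_up_ordering V E lab in {lo ` children E u | u. u \<in> V - leaves V E})"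

end

theory Submission
  imports Defs "HOL-Library.Product_Lexorder"
begin

(* The bottom-up ordering numbers the leaves 1..n by their labels and the internal
   nodes n+1, ..., |V| in increasing lexicographic order of (height, smallest number
   of a child).  So the children of the node numbered k form a block of numbers
   below k, and M(T) determines the numbering: for k = n+1, n+2, ... the block of k
   is, among the blocks of M(T) not yet assigned, the one with the smallest key,
   where the height of a block is one more than the largest height of its elements.
   Two trees with the same matching representation therefore have the same block
   at every number, and composing one ordering with the inverse of the other is a
   label-preserving isomorphism. *)

section \<open>Heights in finite rooted trees\<close>

locale finite_tree =
  fixes V :: "'v set" and E :: "('v \<times> 'v) set"
  assumes rooted: "rooted_tree V E"
begin

lemma finite_V: "finite V"
  using rooted unfolding rooted_tree_def by blast

lemma arcs_in_V: "E \<subseteq> V \<times> V"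
  using rooted unfolding rooted_tree_def by blast

lemma children_subset: "children E u \<subseteq> V"
  using arcs_in_V unfolding children_def by blast

lemma finite_children: "finite (children E u)"
  using children_subset finite_V finite_subset by blast

lemma leaves_subset: "leaves V E \<subseteq> V"
  unfolding leaves_def by blast

lemma not_leaf_iff_child: "v \<in> V \<Longrightarrow> v \<notin> leaves V E \<longleftrightarrow> (\<exists>c. (v, c) \<in> E)"
  unfolding leaves_def children_def by auto

lemma leaf_no_arc: "v \<in> leaves V E \<Longrightarrow> (v, c) \<notin> E"
  unfolding leaves_def children_def by blast

lemma root_exists:
  obtains r where "r \<in> V" "\<And>u. (u, r) \<notin> E" "\<And>v. v \<in> V \<Longrightarrow> (r, v) \<in> E\<^sup>*"
  using rooted unfolding rooted_tree_def by blast

lemma parent_unique: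
  assumes "(u, c) \<in> E" and "(u', c) \<in> E"
  shows "u = u'"
proof -
  obtain r where "\<forall>u. (u, r) \<notin> E" and "\<forall>v\<in>V - {r}. \<exists>!u. (u, v) \<in> E"
    using rooted unfolding rooted_tree_def by blast
  moreover have "c \<in> V" using assms(1) arcs_in_V by blast
  ultimately show ?thesis using assms by blast
qed

lemma relpow_in_V: "(v, w) \<in> E ^^ k \<Longrightarrow> v \<in> V \<Longrightarrow> w \<in> V"
proof (induction k arbitrary: w)
  case (Suc k)
  then show ?case using arcs_in_V by (auto elim!: relpow_Suc_E)
qed simp

lemma depth_unique:
  assumes "\<And>u. (u, r) \<notin> E"
  shows "(r, w) \<in> E ^^ j \<Longrightarrow> (r, w) \<in> E ^^ k \<Longrightarrow> j = k"
proof (induction j arbitrary: w k)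
  case 0
  then show ?case using assms by (cases k) (auto elim!: relpow_Suc_E)
next
  case (Suc j)
  then obtain k' where k: "k = Suc k'"
    using assms by (cases k) (auto elim!: relpow_Suc_E)
  obtain x where "(r, x) \<in> E ^^ j" "(x, w) \<in> E"
    using Suc.prems(1) by (auto elim!: relpow_Suc_E)
  moreover obtain y where "(r, y) \<in> E ^^ k'" "(y, w) \<in> E"
    using Suc.prems(2) k by (auto elim!: relpow_Suc_E)
  ultimately show ?case using Suc.IH parent_unique k by blast
qed

lemma path_length_bounded: "\<exists>B. \<forall>v w k. v \<in> V \<longrightarrow> (v, w) \<in> E ^^ k \<longrightarrow> k \<le> B"
proof -
  obtain r where no_parent: "\<And>u. (u, r) \<notin> E" and reach: "\<And>v. v \<in> V \<Longrightarrow> (r, v) \<in> E\<^sup>*"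
    using root_exists by blast
  define D where "D = (\<Union>w\<in>V. {d. (r, w) \<in> E ^^ d})"
  have "{d. (r, w) \<in> E ^^ d} \<subseteq> {d0}" if "(r, w) \<in> E ^^ d0" for w d0
    using depth_unique[OF no_parent] that by blast
  then have "finite {d. (r, w) \<in> E ^^ d}" for w
    by (cases "\<exists>d0. (r, w) \<in> E ^^ d0") (auto intro: finite_subset)
  then have "finite D"
    unfolding D_def using finite_V by blast
  have "k \<le> Max D" if "v \<in> V" "(v, w) \<in> E ^^ k" for v w k
  proof -
    obtain d where "(r, v) \<in> E ^^ d"
      using reach[OF \<open>v \<in> V\<close>] rtrancl_power by blast
    then have "(r, w) \<in> E ^^ (d + k)"
      using that(2) relpow_add by blast
    then have "d + k \<in> D"
      unfolding D_def using relpow_in_V that by blast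
    then show ?thesis using Max_ge[OF \<open>finite D\<close>] by fastforce
  qed
  then show ?thesis by blast
qed

lemma reaches_leaf:
  assumes "v \<in> V"
  shows "\<exists>w\<in>leaves V E. \<exists>k. (v, w) \<in> E ^^ k"
proof -
  obtain B where B: "\<And>w k. (v, w) \<in> E ^^ k \<Longrightarrow> k \<le> B"
    using path_length_bounded assms by blast
  define K where "K = Max {k. \<exists>w. (v, w) \<in> E ^^ k}"
  have fin: "finite {k. \<exists>w. (v, w) \<in> E ^^ k}"
    unfolding finite_nat_set_iff_bounded_le using B by blast
  have "K \<in> {k. \<exists>w. (v, w) \<in> E ^^ k}"
    unfolding K_def using fin
    by (rule Max_in) (metis (mono_tags) empty_iff mem_Collect_eq relpow_0_I)
  then obtain w where w: "(v, w) \<in> E ^^ K" by blast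
  have "w \<in> leaves V E"
  proof (rule ccontr)
    assume "w \<notin> leaves V E"
    then obtain c where "(w, c) \<in> E"
      using not_leaf_iff_child relpow_in_V[OF w assms] by blast
    then have "Suc K \<in> {k. \<exists>w. (v, w) \<in> E ^^ k}"
      using w by auto
    then show False
      using Max_ge[OF fin] unfolding K_def by fastforce
  qed
  then show ?thesis using w by blast
qed

lemma finite_leaf_path_lengths: "v \<in> V \<Longrightarrow> finite {k. \<exists>w\<in>leaves V E. (v, w) \<in> E ^^ k}"
proof -
  assume "v \<in> V"
  then obtain B where "\<And>w k. (v, w) \<in> E ^^ k \<Longrightarrow> k \<le> B"
    using path_length_bounded by blast
  then show ?thesis unfolding finite_nat_set_iff_bounded_le by blast
qed

lemma height_witness:
  assumes "v \<in> V"
  obtains w where "w \<in> leaves V E" "(v, w) \<in> E ^^ height V E v"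
proof -
  have "height V E v \<in> {k. \<exists>w\<in>leaves V E. (v, w) \<in> E ^^ k}"
    unfolding height_def using finite_leaf_path_lengths[OF assms] reaches_leaf[OF assms]
    by (intro Max_in) auto
  then show ?thesis using that by blast
qed

lemma path_length_le_height:
  "v \<in> V \<Longrightarrow> w \<in> leaves V E \<Longrightarrow> (v, w) \<in> E ^^ k \<Longrightarrow> k \<le> height V E v"
  unfolding height_def using finite_leaf_path_lengths by (intro Max_ge) auto

lemma height_leaf:
  assumes "v \<in> leaves V E"
  shows "height V E v = 0"
proof -
  have "k = 0" if "(v, w) \<in> E ^^ k" for w k
    using that leaf_no_arc[OF assms] by (cases k) (blast dest: relpow_Suc_D2)+
  then have "{k. \<exists>w\<in>leaves V E. (v, w) \<in> E ^^ k} = {0}"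
    using assms by auto
  then show ?thesis unfolding height_def by simp
qed

lemma height_child_less:
  assumes "(u, c) \<in> E"
  shows "height V E c < height V E u"
proof -
  have "u \<in> V" "c \<in> V" using assms arcs_in_V by auto
  obtain w where "w \<in> leaves V E" "(c, w) \<in> E ^^ height V E c"
    using height_witness[OF \<open>c \<in> V\<close>] .
  moreover from this(2) have "(u, w) \<in> E ^^ Suc (height V E c)"
    using assms by (rule relpow_Suc_I2[rotated])
  ultimately show ?thesis
    using path_length_le_height[OF \<open>u \<in> V\<close>] by fastforce
qed

lemma height_eq_0_iff: "v \<in> V \<Longrightarrow> height V E v = 0 \<longleftrightarrow> v \<in> leaves V E"
  using height_leaf height_child_less not_leaf_iff_child by fastforce

lemma height_internal:
  assumes "v \<in> V" and "v \<notin> leaves V E"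
  shows "height V E v = Suc (Max (height V E ` children E v))"
proof (rule antisym)
  obtain w where w: "w \<in> leaves V E" "(v, w) \<in> E ^^ height V E v"
    using height_witness[OF assms(1)] .
  obtain k where k: "height V E v = Suc k"
    using assms height_eq_0_iff by (cases "height V E v") auto
  have "(v, w) \<in> E ^^ Suc k" using w(2) unfolding k .
  then obtain c where c: "(v, c) \<in> E" "(c, w) \<in> E ^^ k"
    by (rule relpow_Suc_E2)
  then have "k \<le> height V E c"
    using path_length_le_height arcs_in_V w(1) by blast
  also have "\<dots> \<le> Max (height V E ` children E v)"
    using c(1) finite_children unfolding children_def by (intro Max_ge) auto
  finally show "height V E v \<le> Suc (Max (height V E ` children E v))"
    using k by simp
next
  obtain c where "(v, c) \<in> E" using assms not_leaf_iff_child by blast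
  then have "children E v \<noteq> {}" unfolding children_def by blast
  then have "Max (height V E ` children E v) \<in> height V E ` children E v"
    using finite_children by (intro Max_in) auto
  then show "Suc (Max (height V E ` children E v)) \<le> height V E v"
    using height_child_less unfolding children_def by fastforce
qed

end

section \<open>The bottom-up ordering\<close>

lemma stratified_fixpoint_ex1:
  fixes F :: "('a \<Rightarrow> 'b) \<Rightarrow> 'a \<Rightarrow> 'b" and level :: "'a \<Rightarrow> nat"
  assumes "finite A"
    and outside: "\<And>f v. v \<notin> A \<Longrightarrow> F f v = c"
    and depends_below: "\<And>f g v. v \<in> A \<Longrightarrow> (\<And>w. w \<in> A \<Longrightarrow> level w < level v \<Longrightarrow> f w = g w) \<Longrightarrow> F f v = F g v"
  shows "\<exists>!f. F f = f"
proof -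
  have unique: "f = g" if f: "F f = f" and g: "F g = g" for f g
  proof -
    have "f v = g v" if "v \<in> A" for v
      using that
    proof (induction "level v" arbitrary: v rule: less_induct)
      case less
      then have "F f v = F g v" by (intro depends_below) auto
      then show ?case using f g by simp
    qed
    moreover have "f v = g v" if "v \<notin> A" for v
      using outside[OF that] f g by metis
    ultimately show "f = g" by blast
  qed
  define z :: "'a \<Rightarrow> 'b" where "z = (\<lambda>_. c)"
  have stable: "v \<in> A \<Longrightarrow> level v < h \<Longrightarrow> (F ^^ (h + j)) z v = (F ^^ h) z v" for h j v
  proof (induction h arbitrary: v)
    case (Suc h)
    then have "F ((F ^^ (h + j)) z) v = F ((F ^^ h) z) v"
      by (intro depends_below) auto
    then show ?case by simp
  qed simp
  define H where "H = Suc (Max (level ` A))"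
  have "level v < H" if "v \<in> A" for v
    unfolding H_def using \<open>finite A\<close> that by (simp add: le_imp_less_Suc)
  then have "F ((F ^^ H) z) v = (F ^^ H) z v" for v
    using stable[of v H 1] outside unfolding H_def by (cases "v \<in> A") auto
  then have "F ((F ^^ H) z) = (F ^^ H) z" ..
  then show ?thesis using unique by blast
qed

lemma card_le_bij_interval:
  assumes "bij_betw f A {1..N}" and "m \<le> N"
  shows "card {a \<in> A. f a \<le> m} = m"
proof -
  have "f ` {a \<in> A. f a \<le> m} = {1..m}"
  proof
    show "f ` {a \<in> A. f a \<le> m} \<subseteq> {1..m}"
      using bij_betwE[OF assms(1)] by auto
    show "{1..m} \<subseteq> f ` {a \<in> A. f a \<le> m}"
    proof
      fix x assume "x \<in> {1..m}"
      moreover from this obtain a where "a \<in> A" "x = f a"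
        using assms bij_betw_imp_surj_on by (metis atLeastAtMost_iff image_iff order_trans)
      ultimately show "x \<in> f ` {a \<in> A. f a \<le> m}" by auto
    qed
  qed
  moreover have "inj_on f {a \<in> A. f a \<le> m}"
    using bij_betw_imp_inj_on[OF assms(1)] by (rule inj_on_subset) auto
  ultimately show ?thesis using card_image by fastforce
qed

locale leaf_labelled_tree = finite_tree V E for V :: "'v set" and E +
  fixes n :: nat and lab :: "'v \<Rightarrow> nat"
  assumes leaf_labelling: "bij_betw lab (leaves V E) {1..n}"
begin

text \<open>Conditions (a)--(c) say that a bottom-up ordering sorts the vertices by \<open>key\<close>,
  that is, it is a fixed point of \<open>rank\<close>.  Since \<open>rank lo v\<close> only depends on \<open>lo\<close> below the
  height of \<open>v\<close>, there is exactly one fixed point.\<close>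

definition key :: "('v \<Rightarrow> nat) \<Rightarrow> 'v \<Rightarrow> nat \<times> nat" where
  "key lo v = (height V E v, if v \<in> leaves V E then lab v else Min (lo ` children E v))"

definition rank :: "('v \<Rightarrow> nat) \<Rightarrow> 'v \<Rightarrow> nat" where
  "rank lo v = (if v \<in> V then card {w \<in> V. key lo w \<le> key lo v} else 0)"

lemma key_less_if_height_less: "height V E v < height V E w \<Longrightarrow> key lo v < key lo w"
  unfolding key_def by simp

lemma key_eq_imp_eq:
  assumes "v \<in> V" "w \<in> V" and "key lo v = key lo w"
    and children_inj: "\<And>c c'. c \<in> children E v \<Longrightarrow> c' \<in> children E w \<Longrightarrow> lo c = lo c' \<Longrightarrow> c = c'"
  shows "v = w"
proof -
  have height_eq: "height V E v = height V E w"
    using assms(3) unfolding key_def by simp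
  show ?thesis
  proof (cases "v \<in> leaves V E")
    case True
    then have "w \<in> leaves V E"
      using height_eq height_leaf height_eq_0_iff[OF assms(2)] by simp
    then have "lab v = lab w"
      using True assms(3) unfolding key_def by simp
    then show ?thesis
      using inj_onD[OF bij_betw_imp_inj_on[OF leaf_labelling]] True \<open>w \<in> leaves V E\<close> by blast
  next
    case False
    then have "w \<notin> leaves V E"
      using False height_eq height_leaf height_eq_0_iff[OF assms(1)] by metis
    then have min_eq: "Min (lo ` children E v) = Min (lo ` children E w)"
      using False assms(3) unfolding key_def by simp
    have "Min (lo ` children E u) \<in> lo ` children E u" if "u \<in> V" "u \<notin> leaves V E" for u
      using that not_leaf_iff_child finite_children unfolding children_def
      by (intro Min_in) auto
    then obtain c c' where "c \<in> children E v" "c' \<in> children E w" "lo c = lo c'"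
      using False \<open>w \<notin> leaves V E\<close> assms(1,2) min_eq by (metis imageE)
    then have "(v, c) \<in> E" "(w, c) \<in> E"
      using children_inj unfolding children_def by auto
    then show ?thesis by (rule parent_unique)
  qed
qed

lemma rank_less:
  assumes "v \<in> V" "w \<in> V" and "key lo v < key lo w"
  shows "rank lo v < rank lo w"
proof -
  have "{u \<in> V. key lo u \<le> key lo v} \<subseteq> {u \<in> V. key lo u \<le> key lo w}"
    using assms(3) by auto
  moreover have "w \<notin> {u \<in> V. key lo u \<le> key lo v}"
    using assms(3) by (simp add: not_le)
  ultimately have "{u \<in> V. key lo u \<le> key lo v} \<subset> {u \<in> V. key lo u \<le> key lo w}"
    using assms(2) by blast
  then show ?thesis
    unfolding rank_def using assms finite_V by (simp add: psubset_card_mono)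
qed

lemma rank_range: "v \<in> V \<Longrightarrow> rank lo v \<in> {1..card V}"
  unfolding rank_def using finite_V by (auto simp: card_gt_0_iff Suc_le_eq intro: card_mono)

lemma height_le_if_key_le: "key lo v \<le> key lo w \<Longrightarrow> height V E v \<le> height V E w"
  using key_less_if_height_less by (metis leD not_le_imp_less)

lemma rank_cong:
  assumes "v \<in> V" and agree: "\<And>w. w \<in> V \<Longrightarrow> height V E w < height V E v \<Longrightarrow> lo w = lo' w"
  shows "rank lo v = rank lo' v"
proof -
  have key_eq: "key lo w = key lo' w" if "height V E w \<le> height V E v" for w
  proof -
    have "lo c = lo' c" if "c \<in> children E w" for c
    proof -
      have "(w, c) \<in> E" using that unfolding children_def by simp
      then have "c \<in> V" "height V E c < height V E v"
        using arcs_in_V height_child_less \<open>height V E w \<le> height V E v\<close> by fastforce+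
      then show ?thesis by (rule agree)
    qed
    then have "lo ` children E w = lo' ` children E w" by (rule image_cong[OF refl])
    then show ?thesis unfolding key_def by simp
  qed
  have "key lo w \<le> key lo v \<longleftrightarrow> key lo' w \<le> key lo' v" for w
  proof (cases "height V E w \<le> height V E v")
    case True
    then show ?thesis using key_eq[OF True] key_eq[OF order_refl] by simp
  next
    case False
    then have "key lo v < key lo w" "key lo' v < key lo' w"
      by (simp_all add: key_less_if_height_less)
    then show ?thesis by (meson leD)
  qed
  then show ?thesis unfolding rank_def by simp
qed

lemma rank_fixpoint_ex1: "\<exists>!lo. rank lo = lo"
proof (rule stratified_fixpoint_ex1[where level = "height V E" and c = 0])
  show "finite V" by (rule finite_V)
  show "rank lo v = 0" if "v \<notin> V" for lo v
    using that unfolding rank_def by simp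
  show "rank lo v = rank lo' v"
    if "v \<in> V" "\<And>w. w \<in> V \<Longrightarrow> height V E w < height V E v \<Longrightarrow> lo w = lo' w" for lo lo' v
    using that by (rule rank_cong)
qed

lemma rank_fixpoint_inj:
  assumes fixed: "rank lo = lo"
  shows "inj_on lo V"
proof -
  have "v = w" if "v \<in> V" "w \<in> V" "lo v = lo w" for v w
    using that
  proof (induction "height V E v" arbitrary: v w rule: less_induct)
    case less
    then have "rank lo v = rank lo w" using fixed by simp
    then have "\<not> key lo v < key lo w" "\<not> key lo w < key lo v"
      using rank_less[OF less.prems(1,2)] rank_less[OF less.prems(2,1)] by (metis less_irrefl)+
    then have "key lo v = key lo w" by (metis linorder_cases)
    moreover have "c = c'" if "c \<in> children E v" "c' \<in> children E w" "lo c = lo c'" for c c'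
    proof -
      have "c \<in> V" "c' \<in> V" using that(1,2) children_subset by auto
      moreover have "height V E c < height V E v"
        using that(1) height_child_less unfolding children_def by simp
      ultimately show ?thesis using less.hyps that(3) by blast
    qed
    ultimately show ?case using key_eq_imp_eq less.prems(1,2) by blast
  qed
  then show ?thesis unfolding inj_on_def by blast
qed

lemma rank_leaf:
  assumes "v \<in> leaves V E"
  shows "rank lo v = lab v"
proof -
  have key_leaf: "key lo u = (0, lab u)" if "u \<in> leaves V E" for u
    using that height_leaf unfolding key_def by simp
  have "w \<in> leaves V E" if "w \<in> V" "key lo w \<le> key lo v" for w
    using height_le_if_key_le[OF that(2)] height_leaf[OF assms] height_eq_0_iff[OF that(1)] by simp
  then have "{w \<in> V. key lo w \<le> key lo v} = {w \<in> leaves V E. key lo w \<le> key lo v}"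
    using leaves_subset by blast
  also have "\<dots> = {w \<in> leaves V E. lab w \<le> lab v}"
    using key_leaf assms by auto
  finally have "{w \<in> V. key lo w \<le> key lo v} = {w \<in> leaves V E. lab w \<le> lab v}" .
  moreover have "lab v \<le> n"
    using bij_betwE[OF leaf_labelling] assms by auto
  ultimately show ?thesis
    using assms leaves_subset card_le_bij_interval[OF leaf_labelling] unfolding rank_def by auto
qed

lemma bottom_up_if_rank_fixpoint:
  assumes fixed: "rank lo = lo"
  shows "bottom_up V E lab lo"
proof -
  have in_range: "lo ` V \<subseteq> {1..card V}"
    using rank_range[of _ lo] unfolding fixed by blast
  have outside: "lo v = 0" if "v \<notin> V" for v
  proof -
    have "rank lo v = 0" using that unfolding rank_def by simp
    then show ?thesis unfolding fixed .
  qed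
  have leaf: "lo v = lab v" if "v \<in> leaves V E" for v
    using rank_leaf[OF that, of lo] unfolding fixed .
  have by_height: "lo u < lo v" if "u \<in> V" "v \<in> V" "height V E u < height V E v" for u v
    using rank_less[OF that(1,2) key_less_if_height_less[OF that(3), of lo]] unfolding fixed .
  have by_min_child: "lo u < lo v"
    if "u \<in> V" "v \<in> V" "0 < height V E u" "height V E u = height V E v"
       "Min (lo ` children E u) < Min (lo ` children E v)" for u v
  proof -
    have "u \<notin> leaves V E" "v \<notin> leaves V E"
      using that height_leaf by auto
    then have "key lo u < key lo v"
      using that unfolding key_def by simp
    then have "rank lo u < rank lo v" by (rule rank_less[OF that(1,2)])
    then show ?thesis unfolding fixed .
  qed
  show ?thesis
    unfolding bottom_up_def
    using rank_fixpoint_inj[OF fixed] in_range outside leaf by_height by_min_child by blast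
qed

lemma bottom_up_key_less:
  assumes bu: "bottom_up V E lab lo" and "v \<in> V" "w \<in> V" and "key lo v < key lo w"
  shows "lo v < lo w"
proof (cases "height V E v < height V E w")
  case True
  then show ?thesis using bu assms(2,3) unfolding bottom_up_def by blast
next
  case False
  then have heq: "height V E v = height V E w"
    using height_le_if_key_le[OF less_imp_le[OF assms(4)]] by simp
  show ?thesis
  proof (cases "height V E v = 0")
    case True
    then have "v \<in> leaves V E" "w \<in> leaves V E"
      using True heq height_eq_0_iff assms(2,3) by metis+
    moreover from this have "lab v < lab w"
      using assms(4) heq unfolding key_def by simp
    ultimately show ?thesis using bu unfolding bottom_up_def by simp
  next
    case False
    then have "v \<notin> leaves V E" "w \<notin> leaves V E"
      using False heq height_eq_0_iff assms(2,3) by metis+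
    then have "Min (lo ` children E v) < Min (lo ` children E w)"
      using assms(4) heq unfolding key_def by simp
    then show ?thesis
      using bu heq False assms(2,3) unfolding bottom_up_def by blast
  qed
qed

lemma bottom_up_key_le_iff:
  assumes bu: "bottom_up V E lab lo" and "v \<in> V" "w \<in> V"
  shows "key lo v \<le> key lo w \<longleftrightarrow> lo v \<le> lo w"
proof
  assume "key lo v \<le> key lo w"
  then consider "key lo v < key lo w" | "key lo v = key lo w" by fastforce
  then show "lo v \<le> lo w"
  proof cases
    case 1
    then show ?thesis using bottom_up_key_less[OF bu assms(2,3)] by simp
  next
    case 2
    have "inj_on lo V" using bu unfolding bottom_up_def by blast
    then have "v = w"
      using key_eq_imp_eq[OF assms(2,3) 2] children_subset unfolding inj_on_def by blast
    then show ?thesis by simp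
  qed
next
  assume "lo v \<le> lo w"
  then show "key lo v \<le> key lo w"
    using bottom_up_key_less[OF bu assms(3,2)] by (meson leD le_less_linear)
qed

lemma bottom_up_bij:
  assumes "bottom_up V E lab lo"
  shows "bij_betw lo V {1..card V}"
proof -
  have "inj_on lo V" "lo ` V \<subseteq> {1..card V}"
    using assms unfolding bottom_up_def by blast+
  moreover from this have "lo ` V = {1..card V}"
    using finite_V by (simp add: card_image card_subset_eq)
  ultimately show ?thesis unfolding bij_betw_def by blast
qed

lemma rank_fixpoint_if_bottom_up:
  assumes bu: "bottom_up V E lab lo"
  shows "rank lo = lo"
proof
  fix v
  show "rank lo v = lo v"
  proof (cases "v \<in> V")
    case True
    then have "{w \<in> V. key lo w \<le> key lo v} = {w \<in> V. lo w \<le> lo v}"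
      using bottom_up_key_le_iff[OF bu] by blast
    moreover have "card {w \<in> V. lo w \<le> lo v} = lo v"
      using card_le_bij_interval bottom_up_bij[OF bu] bij_betwE True by fastforce
    ultimately show ?thesis using True unfolding rank_def by simp
  next
    case False
    then show ?thesis using bu unfolding bottom_up_def rank_def by simp
  qed
qed

lemma bottom_up_ordering: "bottom_up V E lab (bottom_up_ordering V E lab)"
proof -
  have "\<exists>!lo. bottom_up V E lab lo"
    using rank_fixpoint_ex1 bottom_up_if_rank_fixpoint rank_fixpoint_if_bottom_up by metis
  then show ?thesis unfolding bottom_up_ordering_def by (rule theI')
qed

end

section \<open>Reconstructing the numbering from the blocks\<close>

text \<open>\<open>B k\<close> abstracts the block of children of the internal node numbered \<open>k\<close>,
  and \<open>h k\<close> the height of the node numbered \<open>k\<close>.\<close>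

locale block_numbering =
  fixes n N :: nat and B :: "nat \<Rightarrow> nat set" and h :: "nat \<Rightarrow> nat"
  assumes blocks_below: "k \<in> {n<..N} \<Longrightarrow> B k \<subseteq> {1..<k}"
    and height_leaf_number: "k \<in> {1..n} \<Longrightarrow> h k = 0"
    and height_block: "k \<in> {n<..N} \<Longrightarrow> h k = Suc (Max (h ` B k))"
    and inj_blocks: "inj_on B {n<..N}"
    and sorted_blocks:
      "k \<in> {n<..N} \<Longrightarrow> k' \<in> {n<..N} \<Longrightarrow> k < k' \<Longrightarrow> (h k, Min (B k)) < (h k', Min (B k'))"
begin

lemma sorted_blocks_later:
  assumes "k \<in> {n<..N}" "j \<in> {n<..N}" and "B j \<noteq> B k" and "B j \<notin> B ` {n<..<k}"
  shows "(h k, Min (B k)) < (h j, Min (B j))"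
proof -
  have "\<not> j < k" using assms(2,4) by auto
  moreover have "j \<noteq> k" using assms(3) by blast
  ultimately show ?thesis using sorted_blocks assms(1,2) by simp
qed

end

lemma block_numbering_block_less:
  assumes one: "block_numbering n N B1 h1" and two: "block_numbering n N B2 h2"
    and same_blocks: "B1 ` {n<..N} = B2 ` {n<..N}" and k: "k \<in> {n<..N}"
    and earlier: "B1 ` {n<..<k} = B2 ` {n<..<k}"
    and heights: "\<forall>x\<in>B2 k. h1 x = h2 x" and differ: "B1 k \<noteq> B2 k"
  shows "(h1 k, Min (B1 k)) < (h2 k, Min (B2 k))"
proof -
  obtain i where i: "i \<in> {n<..N}" "B1 i = B2 k"
    using same_blocks k by (metis imageE imageI)
  have "B2 k \<notin> B2 ` {n<..<k}"
  proof
    assume "B2 k \<in> B2 ` {n<..<k}"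
    then obtain x where "x \<in> {n<..<k}" "B2 k = B2 x" by blast
    moreover from this have "k = x"
      using k by (intro inj_onD[OF block_numbering.inj_blocks[OF two]]) auto
    ultimately show False by simp
  qed
  then have "(h1 k, Min (B1 k)) < (h1 i, Min (B1 i))"
    using block_numbering.sorted_blocks_later[OF one k i(1)] i(2) differ earlier by simp
  moreover have "h1 i = h2 k"
  proof -
    have "h1 i = Suc (Max (h1 ` B2 k))"
      using block_numbering.height_block[OF one i(1)] i(2) by simp
    also have "\<dots> = Suc (Max (h2 ` B2 k))"
      using heights by (simp cong: image_cong)
    also have "\<dots> = h2 k"
      using block_numbering.height_block[OF two k] by simp
    finally show ?thesis .
  qed
  ultimately show ?thesis using i(2) by simp
qed

lemma block_numbering_unique:
  assumes one: "block_numbering n N B1 h1" and two: "block_numbering n N B2 h2"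
    and same_blocks: "B1 ` {n<..N} = B2 ` {n<..N}"
  shows "k \<in> {n<..N} \<Longrightarrow> B1 k = B2 k"
proof -
  have "h1 k = h2 k \<and> (n < k \<longrightarrow> B1 k = B2 k)" if "k \<in> {1..N}" for k
    using that
  proof (induction k rule: less_induct)
    case (less k)
    show ?case
    proof (cases "n < k")
      case False
      then show ?thesis
        using less.prems block_numbering.height_leaf_number[OF one] block_numbering.height_leaf_number[OF two]
        by simp
    next
      case True
      then have k: "k \<in> {n<..N}" using less.prems by simp
      have IH: "h1 x = h2 x" "n < x \<Longrightarrow> B1 x = B2 x" if "x \<in> {1..<k}" for x
        using less.IH that less.prems by auto
      have earlier: "B1 ` {n<..<k} = B2 ` {n<..<k}"
        using IH(2) by (intro image_cong) auto
      have heights1: "\<forall>x\<in>B1 k. h1 x = h2 x" and heights2: "\<forall>x\<in>B2 k. h1 x = h2 x"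
        using block_numbering.blocks_below[OF one k] block_numbering.blocks_below[OF two k] IH(1)
        by blast+
      have "B1 k = B2 k"
      proof (rule ccontr)
        assume differ: "B1 k \<noteq> B2 k"
        have "(h1 k, Min (B1 k)) < (h2 k, Min (B2 k))"
          using block_numbering_block_less[OF one two same_blocks k earlier heights2 differ] .
        moreover have "(h2 k, Min (B2 k)) < (h1 k, Min (B1 k))"
          using block_numbering_block_less[OF two one same_blocks[symmetric] k earlier[symmetric]]
            heights1 differ by auto
        ultimately show False by (metis less_not_sym)
      qed
      moreover have "h1 k = h2 k"
        using block_numbering.height_block[OF one k] block_numbering.height_block[OF two k]
          heights2 calculation by (simp cong: image_cong)
      ultimately show ?thesis by simp
    qed
  qed
  then show "k \<in> {n<..N} \<Longrightarrow> B1 k = B2 k" by auto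
qed

section \<open>The matching representation determines the tree\<close>

context leaf_labelled_tree
begin

abbreviation bo :: "'v \<Rightarrow> nat" where
  "bo \<equiv> bottom_up_ordering V E lab"

definition vertex :: "nat \<Rightarrow> 'v" where
  "vertex k = inv_into V bo k"

definition block :: "nat \<Rightarrow> nat set" where
  "block k = bo ` children E (vertex k)"

definition block_height :: "nat \<Rightarrow> nat" where
  "block_height k = height V E (vertex k)"

lemma bo_bij: "bij_betw bo V {1..card V}"
  using bottom_up_bij[OF bottom_up_ordering] .

lemma bo_leaf: "v \<in> leaves V E \<Longrightarrow> bo v = lab v"
  using bottom_up_ordering unfolding bottom_up_def by blast

lemma bo_less_if_height_less: "u \<in> V \<Longrightarrow> v \<in> V \<Longrightarrow> height V E u < height V E v \<Longrightarrow> bo u < bo v"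
  using bottom_up_ordering unfolding bottom_up_def by blast

lemma bo_le_n_iff_leaf:
  assumes "v \<in> V"
  shows "bo v \<le> n \<longleftrightarrow> v \<in> leaves V E"
proof
  assume "bo v \<le> n"
  moreover have "1 \<le> bo v" using bij_betwE[OF bo_bij] assms by auto
  ultimately have "bo v \<in> lab ` leaves V E"
    using bij_betw_imp_surj_on[OF leaf_labelling] by simp
  then obtain w where w: "w \<in> leaves V E" "bo v = bo w"
    using bo_leaf by fastforce
  then have "v = w"
    using inj_onD[OF bij_betw_imp_inj_on[OF bo_bij]] assms leaves_subset by blast
  then show "v \<in> leaves V E" using w(1) by simp
next
  assume "v \<in> leaves V E"
  then show "bo v \<le> n" using bo_leaf bij_betwE[OF leaf_labelling] by fastforce
qed

lemma n_le_card: "n \<le> card V"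
  using bij_betw_same_card[OF leaf_labelling] card_mono[OF finite_V leaves_subset] by simp

lemma vertex_bo: "v \<in> V \<Longrightarrow> vertex (bo v) = v"
  unfolding vertex_def using bij_betw_imp_inj_on[OF bo_bij] by (rule inv_into_f_f)

lemma vertex_in_V: "k \<in> {1..card V} \<Longrightarrow> vertex k \<in> V"
  unfolding vertex_def using bij_betw_imp_surj_on[OF bo_bij] by (metis inv_into_into)

lemma bo_vertex: "k \<in> {1..card V} \<Longrightarrow> bo (vertex k) = k"
  unfolding vertex_def using bij_betw_imp_surj_on[OF bo_bij] by (metis f_inv_into_f)

lemma block_bo: "v \<in> V \<Longrightarrow> block (bo v) = bo ` children E v"
  unfolding block_def by (simp add: vertex_bo)

lemma vertex_internal: "k \<in> {n<..card V} \<Longrightarrow> vertex k \<notin> leaves V E"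
  using bo_le_n_iff_leaf[OF vertex_in_V] bo_vertex by fastforce

lemma block_leaf_number: "k \<in> {1..n} \<Longrightarrow> block k = {}"
proof -
  assume k: "k \<in> {1..n}"
  then have "k \<in> {1..card V}" using n_le_card by auto
  then have "vertex k \<in> leaves V E"
    using k bo_le_n_iff_leaf vertex_in_V bo_vertex by fastforce
  then show "block k = {}"
    unfolding block_def leaves_def by simp
qed

lemma key_vertex: "k \<in> {n<..card V} \<Longrightarrow> key bo (vertex k) = (block_height k, Min (block k))"
  unfolding key_def block_def block_height_def using vertex_internal by simp

lemma block_subset:
  assumes k: "k \<in> {n<..card V}"
  shows "block k \<subseteq> {1..<k}"
proof
  fix x assume "x \<in> block k"
  then obtain c where c: "(vertex k, c) \<in> E" "x = bo c"
    unfolding block_def children_def by blast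
  have kV: "k \<in> {1..card V}" using k by auto
  have "c \<in> V" using c(1) arcs_in_V by blast
  then have "1 \<le> x" "x < k"
    using c bij_betwE[OF bo_bij] bo_vertex[OF kV]
      bo_less_if_height_less[OF _ vertex_in_V[OF kV] height_child_less]
    by fastforce+
  then show "x \<in> {1..<k}" by simp
qed

lemma block_height_internal:
  assumes k: "k \<in> {n<..card V}"
  shows "block_height k = Suc (Max (block_height ` block k))"
proof -
  have kV: "k \<in> {1..card V}" using k by auto
  have "block_height (bo c) = height V E c" if "c \<in> children E (vertex k)" for c
  proof -
    have "c \<in> V" using that children_subset by blast
    then show ?thesis unfolding block_height_def by (simp add: vertex_bo)
  qed
  then have "block_height ` block k = height V E ` children E (vertex k)"
    unfolding block_def image_image by (rule image_cong[OF refl])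
  then show ?thesis
    unfolding block_height_def using height_internal[OF vertex_in_V[OF kV] vertex_internal[OF k]]
    by simp
qed

lemma block_height_leaf_number: "k \<in> {1..n} \<Longrightarrow> block_height k = 0"
  using n_le_card bo_le_n_iff_leaf vertex_in_V bo_vertex height_leaf
  unfolding block_height_def by fastforce

lemma inj_on_block: "inj_on block {n<..card V}"
proof (rule inj_onI)
  fix k k' assume k: "k \<in> {n<..card V}" and k': "k' \<in> {n<..card V}" and eq: "block k = block k'"
  obtain c where "(vertex k, c) \<in> E"
    using vertex_internal[OF k] vertex_in_V k not_leaf_iff_child by fastforce
  moreover from this obtain c' where "(vertex k', c') \<in> E" "bo c = bo c'"
    using eq unfolding block_def children_def by blast
  moreover from calculation have "c = c'"
    using arcs_in_V inj_onD[OF bij_betw_imp_inj_on[OF bo_bij]] by blast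
  ultimately have "vertex k = vertex k'" using parent_unique by blast
  moreover have "k \<in> {1..card V}" "k' \<in> {1..card V}" using k k' by auto
  ultimately show "k = k'" using bo_vertex by metis
qed

lemma block_key_sorted:
  assumes k: "k \<in> {n<..card V}" and k': "k' \<in> {n<..card V}" and "k < k'"
  shows "(block_height k, Min (block k)) < (block_height k', Min (block k'))"
proof -
  have "\<not> key bo (vertex k') \<le> key bo (vertex k)"
    using bottom_up_key_le_iff[OF bottom_up_ordering vertex_in_V vertex_in_V] bo_vertex k k' \<open>k < k'\<close>
    by simp
  then show ?thesis
    using key_vertex k k' by (simp add: not_le)
qed

lemma block_numbering: "block_numbering n (card V) block block_height"
  using block_subset block_height_leaf_number block_height_internal inj_on_block block_key_sorted
  by unfold_locales

lemma bo_internal: "bo ` (V - leaves V E) = {n<..card V}"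
proof
  show "bo ` (V - leaves V E) \<subseteq> {n<..card V}"
    using bo_le_n_iff_leaf bij_betwE[OF bo_bij] by fastforce
  show "{n<..card V} \<subseteq> bo ` (V - leaves V E)"
  proof
    fix k assume k: "k \<in> {n<..card V}"
    then have "k \<in> {1..card V}" by auto
    then have "vertex k \<in> V - leaves V E" "k = bo (vertex k)"
      using vertex_in_V vertex_internal[OF k] bo_vertex by auto
    then show "k \<in> bo ` (V - leaves V E)" by blast
  qed
qed

lemma matching_rep_eq: "matching_rep V E lab = block ` {n<..card V}"
proof -
  have "matching_rep V E lab = (\<lambda>u. block (bo u)) ` (V - leaves V E)"
    unfolding matching_rep_def Let_def using block_bo by auto
  also have "\<dots> = block ` {n<..card V}"
    unfolding bo_internal[symmetric] by (simp add: image_image)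
  finally show ?thesis .
qed

lemma card_matching_rep: "card (matching_rep V E lab) = card V - n"
  unfolding matching_rep_eq
  using card_image[OF block_numbering.inj_blocks[OF block_numbering]] by simp

end

lemma phylo_iso_if_numberings_agree:
  assumes bij1: "bij_betw lo1 V1 S" and bij2: "bij_betw lo2 V2 S"
    and arcs1: "E1 \<subseteq> V1 \<times> V1" and arcs2: "E2 \<subseteq> V2 \<times> V2"
    and children: "\<And>u v. u \<in> V1 \<Longrightarrow> v \<in> V2 \<Longrightarrow> lo1 u = lo2 v \<Longrightarrow>
                      lo1 ` children E1 u = lo2 ` children E2 v"
    and leaves1: "\<And>v. v \<in> leaves V1 E1 \<Longrightarrow> lo1 v = lab1 v"
    and leaves2: "\<And>v. v \<in> leaves V2 E2 \<Longrightarrow> lo2 v = lab2 v"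
  shows "phylo_iso V1 E1 lab1 V2 E2 lab2"
proof -
  define f where "f = inv_into V2 lo2 \<circ> lo1"
  have bij: "bij_betw f V1 V2"
    unfolding f_def using bij1 bij_betw_inv_into[OF bij2] by (rule bij_betw_trans)
  have f_in: "f v \<in> V2" if "v \<in> V1" for v
    using bij_betwE[OF bij] that by blast
  have lo2_f: "lo2 (f v) = lo1 v" if "v \<in> V1" for v
    unfolding f_def using bij_betwE[OF bij1] that bij_betw_imp_surj_on[OF bij2]
    by (simp add: f_inv_into_f)
  have children_f: "lo1 ` children E1 u = lo2 ` children E2 (f u)" if "u \<in> V1" for u
    using children[OF that f_in[OF that]] lo2_f[OF that] by simp
  have children_sub1: "children E1 u \<subseteq> V1" and children_sub2: "children E2 w \<subseteq> V2" for u w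
    using arcs1 arcs2 unfolding children_def by blast+
  have arcs: "(u, v) \<in> E1 \<longleftrightarrow> (f u, f v) \<in> E2" if "u \<in> V1" "v \<in> V1" for u v
  proof -
    have "(u, v) \<in> E1 \<longleftrightarrow> lo1 v \<in> lo1 ` children E1 u"
      using inj_on_image_mem_iff[OF bij_betw_imp_inj_on[OF bij1] that(2) children_sub1]
      unfolding children_def by simp
    also have "\<dots> \<longleftrightarrow> lo2 (f v) \<in> lo2 ` children E2 (f u)"
      using children_f[OF that(1)] lo2_f[OF that(2)] by simp
    also have "\<dots> \<longleftrightarrow> (f u, f v) \<in> E2"
      using inj_on_image_mem_iff[OF bij_betw_imp_inj_on[OF bij2] f_in[OF that(2)] children_sub2]
      unfolding children_def by simp
    finally show ?thesis .
  qed
  have labels: "lab2 (f v) = lab1 v" if "v \<in> leaves V1 E1" for v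
  proof -
    have "v \<in> V1" "children E1 v = {}" using that unfolding leaves_def by auto
    then have "lo2 ` children E2 (f v) = {}"
      using children_f[OF \<open>v \<in> V1\<close>] by simp
    then have "f v \<in> leaves V2 E2"
      using f_in[OF \<open>v \<in> V1\<close>] unfolding leaves_def by simp
    then have "lab2 (f v) = lo2 (f v)" by (simp add: leaves2)
    also have "\<dots> = lo1 v" using lo2_f \<open>v \<in> V1\<close> by simp
    also have "\<dots> = lab1 v" using leaves1[OF that] .
    finally show ?thesis .
  qed
  show ?thesis
    unfolding phylo_iso_def using bij arcs labels by blast
qed

lemma leaf_labelled_tree_if_phylo_tree: "phylo_tree n V E lab \<Longrightarrow> leaf_labelled_tree V E n lab"
  unfolding phylo_tree_def leaf_labelled_tree_def leaf_labelled_tree_axioms_def finite_tree_def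
  by blast

theorem corollary2:
  fixes V1 :: "'a set" and E1 :: "('a \<times> 'a) set" and lab1 :: "'a \<Rightarrow> nat"
    and V2 :: "'b set" and E2 :: "('b \<times> 'b) set" and lab2 :: "'b \<Rightarrow> nat"
    and n :: nat
  assumes "phylo_tree n V1 E1 lab1"
    and "phylo_tree n V2 E2 lab2"
    and "matching_rep V1 E1 lab1 = matching_rep V2 E2 lab2"
  shows "phylo_iso V1 E1 lab1 V2 E2 lab2"
proof -
  interpret T1: leaf_labelled_tree V1 E1 n lab1
    using assms(1) by (rule leaf_labelled_tree_if_phylo_tree)
  interpret T2: leaf_labelled_tree V2 E2 n lab2
    using assms(2) by (rule leaf_labelled_tree_if_phylo_tree)
  have same_card: "card V2 = card V1"
    using T1.card_matching_rep T2.card_matching_rep T1.n_le_card T2.n_le_card assms(3) by simp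
  have "T1.block k = T2.block k" if "k \<in> {n<..card V1}" for k
    using block_numbering_unique[OF T1.block_numbering T2.block_numbering[unfolded same_card]] that
      assms(3) unfolding T1.matching_rep_eq T2.matching_rep_eq same_card by blast
  then have same_blocks: "T1.block k = T2.block k" if "k \<in> {1..card V1}" for k
    using that T1.block_leaf_number T2.block_leaf_number by (cases "k \<le> n") auto
  have "T1.bo ` children E1 u = T2.bo ` children E2 v"
    if "u \<in> V1" "v \<in> V2" "T1.bo u = T2.bo v" for u v
  proof -
    have "T1.bo u \<in> {1..card V1}" using bij_betwE[OF T1.bo_bij] that(1) by blast
    then have "T1.block (T1.bo u) = T2.block (T2.bo v)" using same_blocks that(3) by simp
    then show ?thesis using T1.block_bo[OF that(1)] T2.block_bo[OF that(2)] by simp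
  qed
  then show ?thesis
    using phylo_iso_if_numberings_agree[OF T1.bo_bij T2.bo_bij[unfolded same_card]
        T1.arcs_in_V T2.arcs_in_V] T1.bo_leaf T2.bo_leaf
    by metis
qed

end
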